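(* Let $E$ be a Banach lattice with an order continuous norm, let $\mathfrak{B}$ be a Boolean subalgebra of $\mathfrak{B}(E)$ and let $T\colon E\to E$ be a $\mathfrak{B}$-Volterra operator. For every forward filtration $\xi$ in $\mathfrak{B}$: the spaces $\mathcal{M}_0(\xi)$ and $\mathcal{M}_1(\xi^* )$ are isomorphic; and $T$ induces a positive operator $\hat{T}_{\xi}\colon\mathcal{M}_0(\xi)\to\mathcal{M}_0(\xi)$, given by $\hat{T}_{\xi}((x_n)_{n\ge1})=(\xi_nTx_n)_{n\ge1}$, such that $\mathbf{s}\circ\hat{T}_{\xi}=\hat{T}_{L(\xi)}\circ\mathbf{s}$ as maps $\mathcal{M}_0(\xi)\to\mathcal{M}_0(L(\xi))$, and the analogous square $\mathbf{s}\circ\hat{T}_{\xi}=\hat{T}_{L(\xi)}\circ\mathbf{s}$ with $\mathcal{M}_1(\xi^* )$ and $\mathcal{M}_1(L(\xi^* ))$ in place of $\mathcal{M}_0(\xi)$ and $\mathcal{M}_0(L(\xi))$ commutes, where $\mathbf{s}((x_n)_{n\ge1})=(x_{n+1})_{n\ge1}$ is the forward shift.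
   Context: $\mathfrak{B}(E)$ is the Boolean algebra of all order projections on $E$, with $\pi\le\rho$ iff $\pi\rho=\pi$, $\pi\wedge\rho=\pi\rho$, $\pi^*=I_E-\pi$, zero $\mathbf{0}$ and unit $\mathbf{1}=I_E$. A positive operator $T$ is $\mathfrak{B}$-Volterra if for all $\pi\in\mathfrak{B}$, $x,y\in E$, $\pi x=\pi y$ implies $\pi Tx=\pi Ty$. A forward filtration in $\mathfrak{B}$ is a map $\xi\colon\{0,1,\dots,\infty\}\to\mathfrak{B}$ with $\xi_n\le\xi_{n+1}$, $\xi_0=\mathbf 0$, $\xi_\infty=\mathbf 1$; $L(\xi)_0=\xi_0$, $L(\xi)_n=\xi_{n+1}$ ($n\ge1$). For a forward filtration $\xi$, $\xi^*$ is the backward filtration $(\xi^* )_n=(\xi_n)^*$ (so $\xi^*_0=\mathbf 1$, $\xi^*_\infty=\mathbf 0$, decreasing), and $L(\xi^* )$ is defined by the same shift formula, i.e. $L(\xi^* )=(L(\xi))^*$. $\mathcal{M}_0(\xi)$ is the ordered vector space of sequences $(x_n)_{n\ge1}$ in $E$ with $\xi_nx_m=x_n$ whenever $m\ge n\ge1$; for a backward filtration $\eta$, $\mathcal{M}_1(\eta)$ is the set of sequences $(x_n)_{n\ge1}$ with $(I-\eta_n)x_m=x_n$ whenever $m\ge n$. *)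

theory Defs
  imports "HOL-Analysis.Analysis" "HOL-Library.Extended_Nat"
begin

class banach_lattice = banach + ordered_real_vector + lattice +
  assumes lattice_norm:
    "sup x (- x) \<le> sup y (- y) \<Longrightarrow> norm x \<le> norm y"

text \<open>Order continuous norm: every downward directed set with infimum 0
  (i.e. every net decreasing to 0) has infimum of norms 0.\<close>

definition order_continuous_norm :: "'a::banach_lattice itself \<Rightarrow> bool" where
  "order_continuous_norm _ \<longleftrightarrow>
     (\<forall>D::'a set. D \<noteq> {}
        \<and> (\<forall>a\<in>D. \<forall>b\<in>D. \<exists>c\<in>D. c \<le> a \<and> c \<le> b)
        \<and> (\<forall>d\<in>D. 0 \<le> d)
        \<and> (\<forall>z. (\<forall>d\<in>D. z \<le> d) \<longrightarrow> z \<le> 0)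
      \<longrightarrow> (\<forall>e>0. \<exists>d\<in>D. norm d < e))"

definition positive_operator :: "('a::banach_lattice \<Rightarrow> 'a) \<Rightarrow> bool" where
  "positive_operator T \<longleftrightarrow> linear T \<and> (\<forall>x. 0 \<le> x \<longrightarrow> 0 \<le> T x)"

definition order_projection :: "('a::banach_lattice \<Rightarrow> 'a) \<Rightarrow> bool" where
  "order_projection P \<longleftrightarrow> linear P \<and> P \<circ> P = P \<and>
     (\<forall>x. 0 \<le> x \<longrightarrow> 0 \<le> P x \<and> P x \<le> x)"

definition order_projections :: "('a::banach_lattice \<Rightarrow> 'a) set" where
  "order_projections = {P. order_projection P}"

definition pcompl :: "('a::banach_lattice \<Rightarrow> 'a) \<Rightarrow> ('a \<Rightarrow> 'a)" where
  "pcompl P = (\<lambda>x. x - P x)"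

definition ple :: "('a::banach_lattice \<Rightarrow> 'a) \<Rightarrow> ('a \<Rightarrow> 'a) \<Rightarrow> bool" where
  "ple P Q \<longleftrightarrow> P \<circ> Q = P"

definition boolean_subalgebra :: "('a::banach_lattice \<Rightarrow> 'a) set \<Rightarrow> bool" where
  "boolean_subalgebra B \<longleftrightarrow> B \<subseteq> order_projections
     \<and> (\<lambda>x. 0) \<in> B \<and> id \<in> B
     \<and> (\<forall>P\<in>B. \<forall>Q\<in>B. P \<circ> Q \<in> B)
     \<and> (\<forall>P\<in>B. pcompl P \<in> B)"

definition volterra :: "('a::banach_lattice \<Rightarrow> 'a) set \<Rightarrow> ('a \<Rightarrow> 'a) \<Rightarrow> bool" where
  "volterra B T \<longleftrightarrow> positive_operator T \<and>
     (\<forall>P\<in>B. \<forall>x y. P x = P y \<longrightarrow> P (T x) = P (T y))"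

text \<open>Indices {0,1,...,\<infinity>} are modelled by enat.\<close>
definition forward_filtration ::
  "('a::banach_lattice \<Rightarrow> 'a) set \<Rightarrow> (enat \<Rightarrow> 'a \<Rightarrow> 'a) \<Rightarrow> bool" where
  "forward_filtration B \<xi> \<longleftrightarrow> (\<forall>n. \<xi> n \<in> B)
     \<and> (\<forall>n::nat. ple (\<xi> (enat n)) (\<xi> (enat (Suc n))))
     \<and> \<xi> 0 = (\<lambda>x. 0) \<and> \<xi> \<infinity> = id"

definition fstar :: "(enat \<Rightarrow> 'a::banach_lattice \<Rightarrow> 'a) \<Rightarrow> (enat \<Rightarrow> 'a \<Rightarrow> 'a)" where
  "fstar \<xi> = (\<lambda>n. pcompl (\<xi> n))"

text \<open>The shift L: L(xi)_0 = xi_0, L(xi)_n = xi_(n+1) for n \<ge> 1 (and \<infinity>+1 = \<infinity>).\<close>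
definition shiftL :: "(enat \<Rightarrow> 'a \<Rightarrow> 'a) \<Rightarrow> (enat \<Rightarrow> 'a \<Rightarrow> 'a)" where
  "shiftL \<xi> = (\<lambda>n. if n = 0 then \<xi> 0 else \<xi> (n + 1))"

text \<open>Sequences (x_n)_{n\<ge>1} are represented as functions nat \<Rightarrow> 'a
  normalised by x 0 = 0 (the index 0 carries no information).\<close>

definition M0 :: "(enat \<Rightarrow> 'a::banach_lattice \<Rightarrow> 'a) \<Rightarrow> (nat \<Rightarrow> 'a) set" where
  "M0 \<xi> = {x. x 0 = 0 \<and> (\<forall>n m. 1 \<le> n \<and> n \<le> m \<longrightarrow> \<xi> (enat n) (x m) = x n)}"

definition M1 :: "(enat \<Rightarrow> 'a::banach_lattice \<Rightarrow> 'a) \<Rightarrow> (nat \<Rightarrow> 'a) set" where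
  "M1 \<eta> = {x. x 0 = 0 \<and> (\<forall>n m. 1 \<le> n \<and> n \<le> m \<longrightarrow> pcompl (\<eta> (enat n)) (x m) = x n)}"

definition fshift :: "(nat \<Rightarrow> 'a::zero) \<Rightarrow> (nat \<Rightarrow> 'a)" where
  "fshift x = (\<lambda>n. if n = 0 then 0 else x (Suc n))"

definition hatT0 :: "('a::banach_lattice \<Rightarrow> 'a) \<Rightarrow> (enat \<Rightarrow> 'a \<Rightarrow> 'a) \<Rightarrow> (nat \<Rightarrow> 'a) \<Rightarrow> (nat \<Rightarrow> 'a)" where
  "hatT0 T \<xi> x = (\<lambda>n. if n = 0 then 0 else \<xi> (enat n) (T (x n)))"

text \<open>Induced operator on M1(eta): (x_n) \<mapsto> ((I - eta_n) T x_n); for eta = xi*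
  this is again (xi_n T x_n).\<close>
definition hatT1 :: "('a::banach_lattice \<Rightarrow> 'a) \<Rightarrow> (enat \<Rightarrow> 'a \<Rightarrow> 'a) \<Rightarrow> (nat \<Rightarrow> 'a) \<Rightarrow> (nat \<Rightarrow> 'a)" where
  "hatT1 T \<eta> x = (\<lambda>n. if n = 0 then 0 else pcompl (\<eta> (enat n)) (T (x n)))"

definition positive_on :: "(nat \<Rightarrow> 'a::banach_lattice) set \<Rightarrow> ((nat \<Rightarrow> 'a) \<Rightarrow> (nat \<Rightarrow> 'a)) \<Rightarrow> bool" where
  "positive_on S F \<longleftrightarrow> F ` S \<subseteq> S
     \<and> (\<forall>x\<in>S. \<forall>y\<in>S. F (\<lambda>n. x n + y n) = (\<lambda>n. F x n + F y n))
     \<and> (\<forall>x\<in>S. \<forall>c::real. F (\<lambda>n. c *\<^sub>R x n) = (\<lambda>n. c *\<^sub>R F x n))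
     \<and> (\<forall>x\<in>S. (\<forall>n. 0 \<le> x n) \<longrightarrow> (\<forall>n. 0 \<le> F x n))"

definition ordered_vs_isomorphic :: "(nat \<Rightarrow> 'a::banach_lattice) set \<Rightarrow> (nat \<Rightarrow> 'a) set \<Rightarrow> bool" where
  "ordered_vs_isomorphic S S' \<longleftrightarrow> (\<exists>\<Phi>. bij_betw \<Phi> S S'
     \<and> (\<forall>x\<in>S. \<forall>y\<in>S. \<Phi> (\<lambda>n. x n + y n) = (\<lambda>n. \<Phi> x n + \<Phi> y n))
     \<and> (\<forall>x\<in>S. \<forall>c::real. \<Phi> (\<lambda>n. c *\<^sub>R x n) = (\<lambda>n. c *\<^sub>R \<Phi> x n))
     \<and> (\<forall>x\<in>S. \<forall>y\<in>S. (\<forall>n. x n \<le> y n) \<longleftrightarrow> (\<forall>n. \<Phi> x n \<le> \<Phi> y n)))"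

end

theory Submission
  imports Defs
begin

text \<open>Since \<open>(\<xi>\<^sub>n\<^sup>*)\<^sup>* = \<xi>\<^sub>n\<close>, the space \<open>M\<^sub>1(\<xi>\<^sup>*)\<close> is literally \<open>M\<^sub>0(\<xi>)\<close>, and the operator
  induced by \<open>T\<close> on it is the one induced on \<open>M\<^sub>0(\<xi>)\<close>; so the identity is the isomorphism
  and the second square is the first one. That \<open>T\<^sub>\<xi>\<close> maps \<open>M\<^sub>0(\<xi>)\<close> into itself is the
  Volterra property: \<open>\<xi>\<^sub>n x\<^sub>m = x\<^sub>n\<close> gives \<open>\<xi>\<^sub>n x\<^sub>n = \<xi>\<^sub>n x\<^sub>m\<close>, hence \<open>\<xi>\<^sub>n T x\<^sub>n = \<xi>\<^sub>n T x\<^sub>m = \<xi>\<^sub>n \<xi>\<^sub>m T x\<^sub>m\<close>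
  for \<open>n \<le> m\<close>.\<close>

lemma pcompl_pcompl [simp]: "pcompl (pcompl P) = P"
  by (rule ext) (simp add: pcompl_def)

lemma M1_fstar: "M1 (fstar \<xi>) = M0 \<xi>"
  by (simp add: M1_def M0_def fstar_def)

lemma shiftL_fstar: "shiftL (fstar \<xi>) = fstar (shiftL \<xi>)"
  by (rule ext) (simp add: shiftL_def fstar_def)

lemma hatT1_fstar: "hatT1 T (fstar \<xi>) = hatT0 T \<xi>"
  by (rule ext)+ (simp add: hatT1_def hatT0_def fstar_def)

lemma ordered_vs_isomorphic_refl: "ordered_vs_isomorphic S S"
  unfolding ordered_vs_isomorphic_def by (rule exI[of _ id]) simp

lemma ple_refl: "order_projection P \<Longrightarrow> ple P P"
  by (simp add: ple_def order_projection_def)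

lemma ple_trans: "ple P Q \<Longrightarrow> ple Q R \<Longrightarrow> ple P R"
  unfolding ple_def by (metis comp_assoc)

lemma forward_filtration_order_projection:
  assumes "boolean_subalgebra B" and "forward_filtration B \<xi>"
  shows "order_projection (\<xi> n)"
  using assms unfolding boolean_subalgebra_def forward_filtration_def order_projections_def
  by auto

lemma forward_filtration_mono:
  assumes "boolean_subalgebra B" and "forward_filtration B \<xi>" and "n \<le> m"
  shows "\<xi> (enat n) (\<xi> (enat m) y) = \<xi> (enat n) y"
proof -
  have "ple (\<xi> (enat n)) (\<xi> (enat m))"
    using \<open>n \<le> m\<close>
  proof (rule transitive_stepwise_le)
    show "ple (\<xi> (enat k)) (\<xi> (enat k))" for k
      by (rule ple_refl[OF forward_filtration_order_projection[OF assms(1,2)]])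
    show "ple (\<xi> (enat k)) (\<xi> (enat (Suc k)))" for k
      using assms(2) by (simp add: forward_filtration_def)
  qed (rule ple_trans)
  then show ?thesis
    by (metis comp_apply ple_def)
qed

lemma hatT0_M0:
  assumes "boolean_subalgebra B" and "volterra B T" and "forward_filtration B \<xi>"
    and "x \<in> M0 \<xi>"
  shows "hatT0 T \<xi> x \<in> M0 \<xi>"
proof -
  have "\<xi> (enat n) (\<xi> (enat m) (T (x m))) = \<xi> (enat n) (T (x n))"
    if "1 \<le> n" "n \<le> m" for n m
  proof -
    have "\<xi> (enat n) (x n) = \<xi> (enat n) (x m)"
      using \<open>x \<in> M0 \<xi>\<close> that forward_filtration_mono[OF assms(1,3) order_refl]
      unfolding M0_def by auto
    then have "\<xi> (enat n) (T (x n)) = \<xi> (enat n) (T (x m))"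
      using assms(2,3) unfolding volterra_def forward_filtration_def by blast
    then show ?thesis
      using forward_filtration_mono[OF assms(1,3) \<open>n \<le> m\<close>] by simp
  qed
  then show ?thesis
    by (simp add: M0_def hatT0_def)
qed

lemma positive_on_hatT0:
  assumes "boolean_subalgebra B" and "volterra B T" and "forward_filtration B \<xi>"
  shows "positive_on (M0 \<xi>) (hatT0 T \<xi>)"
proof -
  have T: "linear T" "\<And>y. 0 \<le> y \<Longrightarrow> 0 \<le> T y"
    using assms(2) by (auto simp: volterra_def positive_operator_def)
  have \<xi>: "linear (\<xi> n)" "\<And>y. 0 \<le> y \<Longrightarrow> 0 \<le> \<xi> n y" for n
    using forward_filtration_order_projection[OF assms(1,3)]
    by (auto simp: order_projection_def)
  show ?thesis
    unfolding positive_on_def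
    using hatT0_M0[OF assms] T \<xi>
    by (auto simp: hatT0_def linear_add linear_scale)
qed

lemma fshift_M0: "fshift ` M0 \<xi> \<subseteq> M0 (shiftL \<xi>)"
  by (auto simp: M0_def fshift_def shiftL_def enat_0_iff one_enat_def)

lemma fshift_hatT0: "fshift (hatT0 T \<xi> x) = hatT0 T (shiftL \<xi>) (fshift x)"
  by (auto simp: fshift_def hatT0_def shiftL_def enat_0_iff one_enat_def)

theorem lemma4p1:
  fixes B :: "('a::banach_lattice \<Rightarrow> 'a) set" and T :: "'a \<Rightarrow> 'a"
    and \<xi> :: "enat \<Rightarrow> 'a \<Rightarrow> 'a"
  assumes "order_continuous_norm TYPE('a)"
    and "boolean_subalgebra B"
    and "volterra B T"
    and "forward_filtration B \<xi>"
  shows "ordered_vs_isomorphic (M0 \<xi>) (M1 (fstar \<xi>))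
    \<and> positive_on (M0 \<xi>) (hatT0 T \<xi>)
    \<and> fshift ` M0 \<xi> \<subseteq> M0 (shiftL \<xi>)
    \<and> (\<forall>x\<in>M0 \<xi>. fshift (hatT0 T \<xi> x) = hatT0 T (shiftL \<xi>) (fshift x))
    \<and> positive_on (M1 (fstar \<xi>)) (hatT1 T (fstar \<xi>))
    \<and> fshift ` M1 (fstar \<xi>) \<subseteq> M1 (shiftL (fstar \<xi>))
    \<and> (\<forall>x\<in>M1 (fstar \<xi>). fshift (hatT1 T (fstar \<xi>) x)
                          = hatT1 T (shiftL (fstar \<xi>)) (fshift x))"
  using positive_on_hatT0[OF assms(2-4)]
  by (simp add: M1_fstar hatT1_fstar shiftL_fstar ordered_vs_isomorphic_refl fshift_M0 fshift_hatT0)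

end
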